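(* Let $N,l$ be positive integers with $l<N$, let $\hat a(\xi)=\cos^{2N}(\xi/2)\sum_{j=0}^{l}\binom{N-1+j}{j}\sin^{2j}(\xi/2)$ be the type II pseudo spline mask of order $(N,l)$, and let $\phi$ be the pseudo spline of type II, $\hat\phi(\xi)=\prod_{j=1}^\infty\hat a(2^{-j}\xi)$. Let $C_1=2^{-(2l+2)}\sum_{j=l+1}^{N+l}\binom{N+l}{j}$. Let $K\subset[-\pi,\pi]$ be nonempty and such that there is $\xi_0\in K$ with $|\xi_0|=\max_{\xi\in K}|\xi|$, and let $k_0$ be a positive integer such that $2^{-k}C_1|\xi|^{2l+2}<\tfrac12$ for all $\xi\in K$ and all $k>k_0$. Then for all $\xi\in\mathbb R$, $$|\hat\phi(\xi)|\ge C_4\,\chi_K(\xi),\qquad C_4=\prod_{k=1}^{k_0}|\hat a(2^{-k}\xi_0)|\,\exp\!\big(-C_1 2^{-k_0+1}|\xi_0|^{2l+2}\big).$$ *)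

theory Defs
  imports "HOL-Analysis.Analysis"
begin

definition pseudo_mask :: "nat \<Rightarrow> nat \<Rightarrow> real \<Rightarrow> real" where
  "pseudo_mask N l \<xi> = (cos (\<xi>/2)) ^ (2*N) *
     (\<Sum>j=0..l. real ((N - 1 + j) choose j) * (sin (\<xi>/2)) ^ (2*j))"

definition pseudo_phi_hat :: "nat \<Rightarrow> nat \<Rightarrow> real \<Rightarrow> real" where
  "pseudo_phi_hat N l \<xi> = (\<Prod>j. pseudo_mask N l (\<xi> / 2 ^ (Suc j)))"

definition pseudo_C1 :: "nat \<Rightarrow> nat \<Rightarrow> real" where
  "pseudo_C1 N l = 2 powr (- real (2*l+2)) * (\<Sum>j=l+1..N+l. real ((N+l) choose j))"

end

theory Submission imports Defs begin

text \<open>In \<open>y = sin\<^sup>2(\<xi>/2)\<close> the mask is \<open>g(y) = (1-y)^N S(y)\<close> with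
  \<open>S(y) = \<Sum>j\<le>l. binom(N-1+j, j) y^j\<close>, and \<open>g'(y)\<close> collapses to the single term
  \<open>-(N+l) binom(N-1+l, l) y^l (1-y)^(N-1)\<close>. So \<open>g\<close> decreases on \<open>[0,1]\<close> from \<open>g(0) = 1\<close>
  and \<open>1 - g(y) \<le> binom(N+l, l+1) y^(l+1)\<close>; in terms of \<open>\<xi>\<close> the mask lies in \<open>[0,1]\<close>,
  decreases in \<open>|\<xi>|\<close> on \<open>[-pi,pi]\<close> and satisfies \<open>1 - a(\<xi>) \<le> C1 |\<xi>|^(2l+2)\<close>.
  In the product for \<open>\<phi>(\<xi>)\<close>, the first \<open>k0\<close> factors dominate those at \<open>\<xi>0\<close> by
  monotonicity, and every later factor is at least \<open>exp(-2(1 - a))\<close> because \<open>1 - a \<le> 1/2\<close>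
  there; the exponents form a geometric tail summing to \<open>C1 2^(1-k0) |\<xi>|^(2l+2)\<close>.\<close>

definition mask_poly :: "nat \<Rightarrow> nat \<Rightarrow> real \<Rightarrow> real" where
  "mask_poly N l y = (1 - y) ^ N * (\<Sum>j=0..l. real ((N - 1 + j) choose j) * y ^ j)"

lemma pseudo_mask_eq_mask_poly: "pseudo_mask N l \<xi> = mask_poly N l ((sin (\<xi>/2))\<^sup>2)"
  unfolding pseudo_mask_def mask_poly_def by (simp add: power_mult cos_squared_eq)

lemma mask_poly_0 [simp]: "mask_poly N l 0 = 1"
proof -
  have "(\<Sum>j=0..l. real ((N - 1 + j) choose j) * 0 ^ j) = (\<Sum>j\<in>{0..l}. if j = 0 then 1 else 0)"
    by (intro sum.cong) auto
  then show ?thesis by (simp add: mask_poly_def)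
qed

lemma mask_poly_nonneg: "0 \<le> y \<Longrightarrow> y \<le> 1 \<Longrightarrow> 0 \<le> mask_poly N l y"
  unfolding mask_poly_def by (intro mult_nonneg_nonneg sum_nonneg) auto

lemma Suc_mult_choose_shift:
  assumes "1 \<le> N"
  shows "real (Suc l) * real ((N - 1 + Suc l) choose Suc l) = real (N + l) * real ((N - 1 + l) choose l)"
proof -
  have "Suc (N - 1 + l) * ((N - 1 + l) choose l) = (Suc (N - 1 + l) choose Suc l) * Suc l"
    by (rule Suc_times_binomial_eq)
  moreover have "Suc (N - 1 + l) = N + l" "N - 1 + Suc l = Suc (N - 1 + l)"
    using assms by auto
  ultimately show ?thesis
    by (metis of_nat_mult mult.commute)
qed

lemma mask_sum_deriv_identity:
  assumes "1 \<le> N"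
  shows "(1 - y) * (\<Sum>j=0..l. real ((N - 1 + j) choose j) * (real j * y ^ (j - 1)))
           - real N * (\<Sum>j=0..l. real ((N - 1 + j) choose j) * y ^ j)
         = - (real (N + l) * real ((N - 1 + l) choose l) * y ^ l)"
proof (induction l)
  case 0
  then show ?case by simp
next
  case (Suc l)
  let ?c = "\<lambda>j. real ((N - 1 + j) choose j)"
  have "(1 - y) * (\<Sum>j=0..Suc l. ?c j * (real j * y ^ (j - 1)))
          - real N * (\<Sum>j=0..Suc l. ?c j * y ^ j)
      = ((1 - y) * (\<Sum>j=0..l. ?c j * (real j * y ^ (j - 1))) - real N * (\<Sum>j=0..l. ?c j * y ^ j))
        + (real (Suc l) * ?c (Suc l)) * y ^ l - (real (Suc l) + real N) * ?c (Suc l) * y ^ Suc l"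
    by (simp add: algebra_simps del: binomial_Suc_Suc)
  also have "\<dots> = - (real (N + Suc l) * ?c (Suc l) * y ^ Suc l)"
    unfolding Suc.IH Suc_mult_choose_shift[OF assms] by (simp add: algebra_simps del: binomial_Suc_Suc)
  finally show ?case .
qed

lemma mask_poly_has_real_derivative:
  assumes "1 \<le> N"
  shows "(mask_poly N l has_real_derivative
           - (real (N + l) * real ((N - 1 + l) choose l) * y ^ l * (1 - y) ^ (N - 1))) (at y)"
proof -
  define S where "S y = (\<Sum>j=0..l. real ((N - 1 + j) choose j) * y ^ j)" for y
  define S' where "S' = (\<Sum>j=0..l. real ((N - 1 + j) choose j) * (real j * y ^ (j - 1)))"
  have "((\<lambda>y. (1 - y) ^ N) has_real_derivative - (real N * (1 - y) ^ (N - 1))) (at y)"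
    by (auto intro!: derivative_eq_intros)
  moreover have "(S has_real_derivative S') (at y)"
    unfolding S_def S'_def by (auto intro!: derivative_eq_intros DERIV_sum)
  ultimately have "(mask_poly N l has_real_derivative
                    - (real N * (1 - y) ^ (N - 1)) * S y + S' * (1 - y) ^ N) (at y)"
    unfolding mask_poly_def S_def[symmetric] by (rule DERIV_mult)
  moreover have "(1 - y) ^ N = (1 - y) ^ (N - 1) * (1 - y)"
    using assms by (metis Suc_diff_le diff_Suc_1 power_Suc2)
  then have "- (real N * (1 - y) ^ (N - 1)) * S y + S' * (1 - y) ^ N
           = (1 - y) ^ (N - 1) * ((1 - y) * S' - real N * S y)"
    by (subst \<open>(1 - y) ^ N = _\<close>) (simp add: algebra_simps)
  ultimately show ?thesis
    unfolding S_def S'_def mask_sum_deriv_identity[OF assms] by (simp add: mult_ac)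
qed

lemma mask_poly_antimono:
  assumes "1 \<le> N" "0 \<le> y1" "y1 \<le> y2" "y2 \<le> 1"
  shows "mask_poly N l y2 \<le> mask_poly N l y1"
proof (rule DERIV_nonpos_imp_nonincreasing[OF assms(3)])
  fix x assume "y1 \<le> x" "x \<le> y2"
  with assms have "0 \<le> x" "x \<le> 1" by simp_all
  then have "- (real (N + l) * real ((N - 1 + l) choose l) * x ^ l * (1 - x) ^ (N - 1)) \<le> 0"
    by (simp add: zero_le_mult_iff)
  then show "\<exists>d. (mask_poly N l has_real_derivative d) (at x) \<and> d \<le> 0"
    using mask_poly_has_real_derivative[OF assms(1)] by blast
qed

lemma one_minus_mask_poly_le:
  assumes "1 \<le> N" "0 \<le> y" "y \<le> 1"
  shows "1 - mask_poly N l y \<le> real ((N + l) choose Suc l) * y ^ Suc l"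
proof -
  define c where "c = real ((N - 1 + Suc l) choose Suc l)"
  have c_eq: "c = real ((N + l) choose Suc l)"
    unfolding c_def using assms(1) by (simp add: Suc_diff_le)
  let ?h = "\<lambda>y. mask_poly N l y + c * y ^ Suc l"
  have "?h 0 \<le> ?h y"
  proof (rule DERIV_nonneg_imp_nondecreasing[OF assms(2)])
    fix x assume "0 \<le> x" "x \<le> y"
    with assms have x: "0 \<le> x" "x \<le> 1" by simp_all
    let ?a = "real (N + l) * real ((N - 1 + l) choose l) * x ^ l"
    have "(?h has_real_derivative - (?a * (1 - x) ^ (N - 1)) + c * (real (Suc l) * x ^ l)) (at x)"
      by (rule derivative_eq_intros mask_poly_has_real_derivative[OF assms(1)] refl | simp)+
    moreover have "c * (real (Suc l) * x ^ l) = ?a"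
      using Suc_mult_choose_shift[OF assms(1), of l] unfolding c_def by (metis mult.commute mult.assoc)
    then have "- (?a * (1 - x) ^ (N - 1)) + c * (real (Suc l) * x ^ l) = ?a * (1 - (1 - x) ^ (N - 1))"
      by (simp add: algebra_simps)
    moreover have "0 \<le> ?a * (1 - (1 - x) ^ (N - 1))"
      using x by (simp add: power_le_one)
    ultimately show "\<exists>d. (?h has_real_derivative d) (at x) \<and> 0 \<le> d"
      by auto
  qed
  then show ?thesis by (simp add: c_eq)
qed

lemma pseudo_mask_nonneg: "0 \<le> pseudo_mask N l \<xi>"
  unfolding pseudo_mask_eq_mask_poly by (rule mask_poly_nonneg) (simp_all add: abs_square_le_1)

lemma pseudo_mask_le_one: "1 \<le> N \<Longrightarrow> pseudo_mask N l \<xi> \<le> 1"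
  using mask_poly_antimono[of N 0 "(sin (\<xi>/2))\<^sup>2" l]
  unfolding pseudo_mask_eq_mask_poly by (simp add: abs_square_le_1)

lemma power2_sin_mono:
  fixes s t :: real
  assumes "\<bar>s\<bar> \<le> \<bar>t\<bar>" "\<bar>t\<bar> \<le> pi/2"
  shows "(sin s)\<^sup>2 \<le> (sin t)\<^sup>2"
proof -
  have "(sin s)\<^sup>2 = (sin \<bar>s\<bar>)\<^sup>2" "(sin t)\<^sup>2 = (sin \<bar>t\<bar>)\<^sup>2"
    by (cases "0 \<le> s"; cases "0 \<le> t"; simp)+
  moreover have "0 \<le> sin \<bar>s\<bar>" "sin \<bar>s\<bar> \<le> sin \<bar>t\<bar>"
    using assms by (auto intro: sin_ge_zero simp: sin_mono_le_eq)
  ultimately show ?thesis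
    by (simp add: power_mono)
qed

lemma pseudo_mask_antimono:
  assumes "1 \<le> N" "\<bar>\<xi>1\<bar> \<le> \<bar>\<xi>2\<bar>" "\<bar>\<xi>2\<bar> \<le> pi"
  shows "pseudo_mask N l \<xi>2 \<le> pseudo_mask N l \<xi>1"
  unfolding pseudo_mask_eq_mask_poly
proof (rule mask_poly_antimono[OF assms(1)])
  show "(sin (\<xi>1/2))\<^sup>2 \<le> (sin (\<xi>2/2))\<^sup>2"
    using assms(2,3) by (intro power2_sin_mono) simp_all
qed (simp_all add: abs_square_le_1)

lemma one_minus_pseudo_mask_le:
  assumes "1 \<le> N"
  shows "1 - pseudo_mask N l \<xi> \<le> pseudo_C1 N l * \<bar>\<xi>\<bar> ^ (2*l+2)"
proof -
  define B where "B = (\<Sum>j=l+1..N+l. real ((N+l) choose j))"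
  have "1 - pseudo_mask N l \<xi> \<le> real ((N + l) choose Suc l) * ((sin (\<xi>/2))\<^sup>2) ^ Suc l"
    unfolding pseudo_mask_eq_mask_poly
    by (rule one_minus_mask_poly_le[OF assms]) (simp_all add: abs_square_le_1)
  also have "\<dots> \<le> B * ((\<xi>/2)\<^sup>2) ^ Suc l"
  proof (rule mult_mono)
    show "real ((N + l) choose Suc l) \<le> B"
      unfolding B_def by (rule member_le_sum) (use assms in auto)
    have "(sin (\<xi>/2))\<^sup>2 \<le> (\<xi>/2)\<^sup>2"
      using power_mono[OF abs_sin_x_le_abs_x[of "\<xi>/2"] abs_ge_zero, of 2] by (simp add: power_divide)
    then show "((sin (\<xi>/2))\<^sup>2) ^ Suc l \<le> ((\<xi>/2)\<^sup>2) ^ Suc l"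
      by (rule power_mono) simp
  qed (simp_all add: B_def sum_nonneg)
  also have "((\<xi>/2)\<^sup>2) ^ Suc l = \<bar>\<xi>/2\<bar> ^ (2 * Suc l)"
    by (simp only: power_mult[symmetric] power_even_abs even_mult_iff even_numeral simp_thms)
  also have "\<dots> = \<bar>\<xi>\<bar> ^ (2*l+2) / 2 ^ (2*l+2)"
    by (simp add: power_divide)
  also have "B * (\<bar>\<xi>\<bar> ^ (2*l+2) / 2 ^ (2*l+2)) = pseudo_C1 N l * \<bar>\<xi>\<bar> ^ (2*l+2)"
  proof -
    have "(2::real) powr (- real (2*l+2)) = inverse (2 ^ (2*l+2))"
      by (subst powr_minus, subst powr_realpow) simp_all
    then show ?thesis
      unfolding pseudo_C1_def B_def[symmetric] by (simp only: divide_inverse mult_ac)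
  qed
  finally show ?thesis .
qed

lemma exp_minus_two_mult_le_one_minus:
  fixes t :: real
  assumes "0 \<le> t" "t \<le> 1/2"
  shows "exp (-2 * t) \<le> 1 - t"
proof -
  have "-2 * t \<le> - t - 2 * t\<^sup>2"
    using mult_left_mono[OF \<open>t \<le> 1/2\<close> \<open>0 \<le> t\<close>] by (simp add: power2_eq_square)
  also have "\<dots> \<le> ln (1 - t)"
    by (rule ln_one_minus_pos_lower_bound[OF assms])
  finally show ?thesis
    using assms by (simp add: ln_ge_iff)
qed

lemma prodinf_ge_initial_prod_mult_exp_tail:
  fixes f t :: "nat \<Rightarrow> real"
  assumes f_nonneg: "\<And>j. 0 \<le> f j" and f_le_one: "\<And>j. f j \<le> 1"
    and majorant: "\<And>j. 1 - f j \<le> t j" and tail_small: "\<And>j. k \<le> j \<Longrightarrow> t j \<le> 1/2"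
    and "summable t"
  shows "(\<Prod>j<k. f j) * exp (-2 * (\<Sum>j. t (j + k))) \<le> (\<Prod>j. f j)"
proof -
  have t_nonneg: "0 \<le> t j" for j
    using f_le_one[of j] majorant[of j] by linarith
  have "summable (\<lambda>j. norm (f j - 1))"
    using \<open>summable t\<close> by (rule summable_comparison_test') (use f_le_one majorant in simp)
  then have "convergent_prod f"
    by (intro abs_convergent_prod_imp_convergent_prod summable_imp_abs_convergent_prod)
  then have lim: "(\<lambda>n. \<Prod>i\<le>n. f i) \<longlonglongrightarrow> (\<Prod>j. f j)"
    by (rule convergent_prod_LIMSEQ)
  have tail_prod: "exp (-2 * (\<Sum>j. t (j + k))) \<le> (\<Prod>i=k..n. f i)" if "k \<le> n" for n
  proof -
    have "(\<Sum>i=k..n. t i) = (\<Sum>j=0..n-k. t (j + k))"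
      using sum.shift_bounds_cl_nat_ivl[of t 0 k "n - k"] that by simp
    also have "\<dots> \<le> (\<Sum>j. t (j + k))"
      using \<open>summable t\<close> t_nonneg by (intro sum_le_suminf summable_ignore_initial_segment) auto
    finally have "exp (-2 * (\<Sum>j. t (j + k))) \<le> exp (-2 * (\<Sum>i=k..n. t i))"
      by simp
    also have "\<dots> = (\<Prod>i=k..n. exp (-2 * t i))"
      by (simp add: exp_sum[symmetric] sum_distrib_left)
    also have "\<dots> \<le> (\<Prod>i=k..n. f i)"
    proof (rule prod_mono)
      fix i assume "i \<in> {k..n}"
      then have "exp (-2 * t i) \<le> 1 - t i"
        using t_nonneg tail_small by (intro exp_minus_two_mult_le_one_minus) auto
      then show "0 \<le> exp (-2 * t i) \<and> exp (-2 * t i) \<le> f i"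
        using majorant[of i] by simp
    qed
    finally show ?thesis .
  qed
  show ?thesis
  proof (rule LIMSEQ_le_const[OF lim], intro exI allI impI)
    fix n assume "k \<le> n"
    then have "{..n} = {..<k} \<union> {k..n}"
      by auto
    then have "(\<Prod>i\<le>n. f i) = (\<Prod>i<k. f i) * (\<Prod>i=k..n. f i)"
      by (simp only:) (rule prod.union_disjoint; auto)
    then show "(\<Prod>j<k. f j) * exp (-2 * (\<Sum>j. t (j + k))) \<le> (\<Prod>i\<le>n. f i)"
      using tail_prod[OF \<open>k \<le> n\<close>] f_nonneg by (simp add: mult_left_mono prod_nonneg)
  qed
qed

lemma pseudo_C1_nonneg: "0 \<le> pseudo_C1 N l"
  unfolding pseudo_C1_def by (simp add: sum_nonneg)

lemma two_powr_minus: "(2::real) powr (- real k) = (1/2) ^ k"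
  by (simp add: powr_minus powr_realpow power_one_over inverse_eq_divide)

definition pseudo_C4 :: "nat \<Rightarrow> nat \<Rightarrow> nat \<Rightarrow> real \<Rightarrow> real" where
  "pseudo_C4 N l k0 \<xi> = (\<Prod>k=1..k0. pseudo_mask N l (2 powr (- real k) * \<xi>)) *
     exp (- pseudo_C1 N l * 2 powr (- real k0 + 1) * \<bar>\<xi>\<bar> ^ (2*l+2))"

lemma pseudo_C4_le_pseudo_phi_hat:
  assumes "1 \<le> N"
    and tail: "\<forall>k>k0. 2 powr (- real k) * pseudo_C1 N l * \<bar>\<xi>\<bar> ^ (2*l+2) < 1/2"
  shows "pseudo_C4 N l k0 \<xi> \<le> pseudo_phi_hat N l \<xi>"
proof -
  define E where "E = pseudo_C1 N l * \<bar>\<xi>\<bar> ^ (2*l+2)"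
  define t where "t j = E * (1/2) ^ Suc j" for j
  have E_nonneg: "0 \<le> E"
    unfolding E_def using pseudo_C1_nonneg by simp
  have majorant: "1 - pseudo_mask N l (\<xi> / 2 ^ Suc j) \<le> t j" for j
  proof -
    have "1 - pseudo_mask N l (\<xi> / 2 ^ Suc j) \<le> pseudo_C1 N l * \<bar>\<xi> / 2 ^ Suc j\<bar> ^ (2*l+2)"
      by (rule one_minus_pseudo_mask_le[OF assms(1)])
    also have "\<dots> = E * ((1/2) ^ Suc j) ^ (2*l+2)"
      unfolding E_def by (simp add: abs_divide power_divide power_one_over)
    also have "\<dots> \<le> E * ((1/2) ^ Suc j) ^ 1"
      using E_nonneg by (intro mult_left_mono power_decreasing) (simp_all add: power_le_one order_trans[OF power_le_one])
    finally show ?thesis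
      by (simp add: t_def)
  qed
  have tail_small: "t j \<le> 1/2" if "k0 \<le> j" for j
    using tail[rule_format, of "Suc j"] that unfolding t_def E_def two_powr_minus by (simp add: mult_ac)
  have "summable t"
    unfolding t_def by (intro summable_mult summable_geometric_iff[THEN iffD2]) simp
  have tail_sum: "(\<Sum>j. t (j + k0)) = E * (1/2) ^ k0"
  proof -
    have "(\<lambda>j. t (j + k0)) = (\<lambda>j. E * (1/2) ^ Suc k0 * (1/2) ^ j)"
      by (simp add: t_def power_add mult_ac)
    moreover have "(\<lambda>j. E * (1/2) ^ Suc k0 * (1/2) ^ j) sums (E * (1/2) ^ Suc k0 * (1 / (1 - 1/2)))"
      by (intro sums_mult geometric_sums) simp
    ultimately show ?thesis
      by (simp add: sums_iff)
  qed
  have "(\<Prod>j<k0. pseudo_mask N l (\<xi> / 2 ^ Suc j)) * exp (-2 * (\<Sum>j. t (j + k0)))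
          \<le> pseudo_phi_hat N l \<xi>"
    unfolding pseudo_phi_hat_def
    using \<open>summable t\<close> majorant tail_small pseudo_mask_nonneg pseudo_mask_le_one[OF assms(1)]
    by (intro prodinf_ge_initial_prod_mult_exp_tail) auto
  moreover have "(\<Prod>k=1..k0. pseudo_mask N l (2 powr (- real k) * \<xi>))
                   = (\<Prod>j<k0. pseudo_mask N l (\<xi> / 2 ^ Suc j))"
    by (simp add: prod.atLeast1_atMost_eq two_powr_minus power_one_over del: of_nat_Suc)
  moreover have "- pseudo_C1 N l * 2 powr (- real k0 + 1) * \<bar>\<xi>\<bar> ^ (2*l+2) = -2 * (E * (1/2) ^ k0)"
  proof -
    have "(2::real) powr (- real k0 + 1) = 2 * (1/2) ^ k0"
      by (subst powr_add) (simp add: two_powr_minus)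
    then show ?thesis
      unfolding E_def by simp
  qed
  ultimately show ?thesis
    unfolding pseudo_C4_def by (simp add: tail_sum)
qed

lemma pseudo_C4_antimono:
  assumes "1 \<le> N" "\<bar>\<xi>\<bar> \<le> \<bar>\<xi>0\<bar>" "\<bar>\<xi>0\<bar> \<le> pi"
  shows "pseudo_C4 N l k0 \<xi>0 \<le> pseudo_C4 N l k0 \<xi>"
proof -
  have initial: "(\<Prod>k=1..k0. pseudo_mask N l (2 powr (- real k) * \<xi>0))
                   \<le> (\<Prod>k=1..k0. pseudo_mask N l (2 powr (- real k) * \<xi>))"
  proof (rule prod_mono)
    fix k :: nat
    have "\<bar>2 powr (- real k) * \<xi>0\<bar> \<le> \<bar>\<xi>0\<bar>"
      by (simp add: abs_mult two_powr_minus mult_left_le_one_le power_le_one)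
    then show "0 \<le> pseudo_mask N l (2 powr (- real k) * \<xi>0) \<and>
               pseudo_mask N l (2 powr (- real k) * \<xi>0) \<le> pseudo_mask N l (2 powr (- real k) * \<xi>)"
      using assms pseudo_mask_nonneg
      by (auto simp: abs_mult intro!: pseudo_mask_antimono[OF \<open>1 \<le> N\<close>] mult_left_mono)
  qed
  have "pseudo_C1 N l * 2 powr (- real k0 + 1) * \<bar>\<xi>\<bar> ^ (2*l+2)
          \<le> pseudo_C1 N l * 2 powr (- real k0 + 1) * \<bar>\<xi>0\<bar> ^ (2*l+2)"
    using assms(2) pseudo_C1_nonneg by (intro mult_left_mono power_mono) simp_all
  then have "exp (- pseudo_C1 N l * 2 powr (- real k0 + 1) * \<bar>\<xi>0\<bar> ^ (2*l+2))
               \<le> exp (- pseudo_C1 N l * 2 powr (- real k0 + 1) * \<bar>\<xi>\<bar> ^ (2*l+2))"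
    by simp
  with initial show ?thesis
    unfolding pseudo_C4_def by (rule mult_mono) (simp_all add: prod_nonneg pseudo_mask_nonneg)
qed

theorem mainTheorem6:
  fixes N l k0 :: nat and K :: "real set" and \<xi>0 :: real
  assumes "0 < l" and "l < N"
    and "K \<subseteq> {-pi..pi}" and "K \<noteq> {}"
    and "\<xi>0 \<in> K" and "\<forall>\<xi>\<in>K. \<bar>\<xi>\<bar> \<le> \<bar>\<xi>0\<bar>"
    and "0 < k0"
    and "\<forall>\<xi>\<in>K. \<forall>k>k0. 2 powr (- real k) * pseudo_C1 N l * \<bar>\<xi>\<bar> ^ (2*l+2) < 1/2"
  shows "\<forall>\<xi>::real. \<bar>pseudo_phi_hat N l \<xi>\<bar> \<ge>
     ((\<Prod>k=1..k0. \<bar>pseudo_mask N l (2 powr (- real k) * \<xi>0)\<bar>) *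
       exp (- pseudo_C1 N l * 2 powr (- real k0 + 1) * \<bar>\<xi>0\<bar> ^ (2*l+2)))
     * indicator K \<xi>"
proof
  fix \<xi> :: real
  have "(\<Prod>k=1..k0. \<bar>pseudo_mask N l (2 powr (- real k) * \<xi>0)\<bar>) *
          exp (- pseudo_C1 N l * 2 powr (- real k0 + 1) * \<bar>\<xi>0\<bar> ^ (2*l+2)) = pseudo_C4 N l k0 \<xi>0"
    unfolding pseudo_C4_def by (simp add: pseudo_mask_nonneg)
  moreover have "pseudo_C4 N l k0 \<xi>0 \<le> pseudo_phi_hat N l \<xi>" if "\<xi> \<in> K"
  proof -
    have "1 \<le> N" "\<bar>\<xi>\<bar> \<le> \<bar>\<xi>0\<bar>" "\<bar>\<xi>0\<bar> \<le> pi"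
      using assms that by (auto simp: subset_iff abs_le_iff)
    then have "pseudo_C4 N l k0 \<xi>0 \<le> pseudo_C4 N l k0 \<xi>"
      by (rule pseudo_C4_antimono)
    also have "\<dots> \<le> pseudo_phi_hat N l \<xi>"
      using assms(8) that by (intro pseudo_C4_le_pseudo_phi_hat[OF \<open>1 \<le> N\<close>]) simp
    finally show ?thesis .
  qed
  ultimately show "\<bar>pseudo_phi_hat N l \<xi>\<bar> \<ge> ((\<Prod>k=1..k0. \<bar>pseudo_mask N l (2 powr (- real k) * \<xi>0)\<bar>) *
          exp (- pseudo_C1 N l * 2 powr (- real k0 + 1) * \<bar>\<xi>0\<bar> ^ (2*l+2))) * indicator K \<xi>"
    by (auto simp: indicator_def)
qed

end
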